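(* There are absolute constants $c,C>0$ such that the following holds. Let $a$ be a symmetric, sub-gaussian random variable with $\mathbb{E}a^2=1$, let $\mathbf{a}$ be a random vector in $\mathbb{R}^n$ with i.i.d. coordinates distributed as $a$, let $\mathbf{x}\in S^{n-1}$, and define $\mathbf{v}_{\mathbf{x}}=\mathbb{E}\,\mathrm{sign}(\langle\mathbf{a},\mathbf{x}\rangle)\mathbf{a}$. If $\|\mathbf{x}\|_\infty\le c/\mathbb{E}|a|^3$, then $\|\mathbf{v}_{\mathbf{x}}\|_\infty\le C\,\mathbb{E}|a|^3\|\mathbf{x}\|_\infty$.
   Context: $\mathrm{sign}(t)=1$ if $t\ge0$ and $-1$ otherwise. $S^{n-1}$ is the Euclidean unit sphere in $\mathbb{R}^n$. *)

theory Defs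
  imports "HOL-Probability.Probability"
begin

definition sgn0 :: "real \<Rightarrow> real" where
  "sgn0 t = (if t \<ge> 0 then 1 else -1)"

definition symmetric_distr :: "real measure \<Rightarrow> bool" where
  "symmetric_distr \<mu> \<longleftrightarrow> distr \<mu> borel uminus = \<mu>"

definition subgaussian_distr :: "real measure \<Rightarrow> bool" where
  "subgaussian_distr \<mu> \<longleftrightarrow>
     (\<exists>K>0. \<forall>t\<ge>0. measure \<mu> {s. \<bar>s\<bar> > t} \<le> 2 * exp (- (t\<^sup>2 / K\<^sup>2)))"

definition sup_norm :: "nat \<Rightarrow> (nat \<Rightarrow> real) \<Rightarrow> real" where
  "sup_norm n x = Max ((\<lambda>i. \<bar>x i\<bar>) ` {..<n})"

definition v_vec :: "real measure \<Rightarrow> nat \<Rightarrow> (nat \<Rightarrow> real) \<Rightarrow> nat \<Rightarrow> real" where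
  "v_vec \<mu> n x i = (\<integral>\<omega>. sgn0 (\<Sum>j<n. \<omega> j * x j) * \<omega> i \<partial>(PiM {..<n} (\<lambda>_. \<mu>)))"

end

theory Submission
  imports Defs
begin

text \<open>
  Write \<open>\<langle>a, x\<rangle> = a\<^sub>i x\<^sub>i + R\<close> with \<open>R\<close> independent of \<open>a\<^sub>i\<close>. As \<open>a\<^sub>i\<close> is centred,
  \<open>v\<^sub>i = E[(sign(a\<^sub>i x\<^sub>i + R) - sign R) a\<^sub>i]\<close>, and the bracket vanishes unless
  \<open>|R| \<le> |a\<^sub>i x\<^sub>i|\<close>; so \<open>|v\<^sub>i| \<le> 2 E[|a\<^sub>i| P(|R| \<le> |a\<^sub>i| |x\<^sub>i|)]\<close>.
  The small-ball probability \<open>P(|R| \<le> s) \<lesssim> s + E|a|\<^sup>3 \<parallel>x\<parallel>\<^sub>\<infinity>\<close> is an Esseen-type bound: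
  the characteristic function of \<open>R\<close> is a product of factors at most \<open>exp(-u\<^sup>2x\<^sub>j\<^sup>2/3)\<close>
  for \<open>u \<le> 1/(E|a|\<^sup>3 \<parallel>x\<parallel>\<^sub>\<infinity>)\<close>, and \<open>\<Sum>\<^sub>j\<^sub>\<noteq>\<^sub>i x\<^sub>j\<^sup>2 \<ge> 1/2\<close>. Esseen's bound itself comes from
  integrating the non-negative kernel \<open>\<integral>\<^sub>0\<^sup>T (1 - u/T) cos(uy) du\<close>, which is at least
  \<open>T/4\<close> on \<open>|y| \<le> 1/T\<close>, against the law of \<open>R\<close> and applying Fubini.
\<close>

lemma cos_ge_half: "\<bar>z::real\<bar> \<le> 1 \<Longrightarrow> cos z \<ge> 1/2"
proof -
  assume "\<bar>z\<bar> \<le> 1"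
  then have "cos (pi/3) \<le> cos \<bar>z\<bar>"
    using pi_gt3 by (intro cos_monotone_0_pi_le) auto
  then show ?thesis by (simp add: cos_60)
qed

lemma integrable_lborel_Icc:
  fixes f :: "real \<Rightarrow> real"
  shows "continuous_on {a..b} f \<Longrightarrow> integrable lborel (\<lambda>x. indicator {a..b} x *\<^sub>R f x :: real)"
  using borel_integrable_atLeastAtMost'[of a b f] by (simp add: set_integrable_def)

lemma integral_lborel_Icc_FTC:
  fixes f F :: "real \<Rightarrow> real"
  assumes "a \<le> b" "continuous_on {a..b} f"
    and "\<And>u. a \<le> u \<Longrightarrow> u \<le> b \<Longrightarrow> (F has_real_derivative f u) (at u within {a..b})"
  shows "(\<integral>u. indicator {a..b} u *\<^sub>R f u \<partial>lborel) = F b - F a"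
  using assms by (intro integral_FTC_atLeastAtMost)
    (auto simp: has_real_derivative_iff_has_vector_derivative[symmetric])

lemma norm_integral_le_nn_integral:
  fixes f :: "'a \<Rightarrow> real"
  shows "ennreal \<bar>integral\<^sup>L M f\<bar> \<le> (\<integral>\<^sup>+x. ennreal \<bar>f x\<bar> \<partial>M)"
  using integral_norm_bound_ennreal[of M f]
  by (cases "integrable M f") (auto simp: not_integrable_integral_eq)

section \<open>The Fej\'er kernel\<close>

definition fejer_kernel :: "real \<Rightarrow> real \<Rightarrow> real" where
  "fejer_kernel T y = (\<integral>u. indicator {0..T} u *\<^sub>R ((1 - u/T) * cos (u*y)) \<partial>lborel)"

lemma fejer_kernel_eq:
  assumes T: "T > 0"
  shows "fejer_kernel T y = (if y = 0 then T/2 else (1 - cos (T*y)) / (T * y\<^sup>2))"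
proof (cases "y = 0")
  case True
  have "fejer_kernel T y = (T - T\<^sup>2/(2*T)) - (0 - 0\<^sup>2/(2*T))"
    unfolding fejer_kernel_def True
    by (rule integral_lborel_Icc_FTC)
       (use T in \<open>auto intro!: derivative_eq_intros continuous_intros simp: field_simps\<close>)
  then show ?thesis using True T by (simp add: power2_eq_square)
next
  case False
  let ?F = "\<lambda>u. (1 - u/T) * sin (u*y) / y - cos (u*y) / (T * y\<^sup>2)"
  have "fejer_kernel T y = ?F T - ?F 0"
    unfolding fejer_kernel_def
    by (rule integral_lborel_Icc_FTC)
       (use T False in \<open>auto intro!: derivative_eq_intros continuous_intros
                           simp: field_simps power2_eq_square\<close>)
  then show ?thesis using T False by (simp add: field_simps power2_eq_square)
qed

lemma fejer_kernel_nonneg: "T > 0 \<Longrightarrow> fejer_kernel T y \<ge> 0"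
  by (simp add: fejer_kernel_eq)

lemma fejer_kernel_measurable[measurable]:
  assumes "T > 0" shows "fejer_kernel T \<in> borel_measurable borel"
proof -
  have "fejer_kernel T = (\<lambda>y. if y = 0 then T/2 else (1 - cos (T*y)) / (T * y\<^sup>2))"
    using fejer_kernel_eq[OF assms] by blast
  then show ?thesis by simp
qed

lemma fejer_kernel_le:
  assumes T: "T > 0" shows "fejer_kernel T y \<le> T/2"
proof -
  have "fejer_kernel T y \<le> fejer_kernel T 0"
    unfolding fejer_kernel_def
  proof (intro integral_mono integrable_lborel_Icc continuous_intros)
    fix u
    have "u \<in> {0..T} \<Longrightarrow> (1 - u/T) * cos (u*y) \<le> 1 - u/T"
      using T by (intro mult_left_le) (auto simp: field_simps)
    then show "indicator {0..T} u *\<^sub>R ((1 - u/T) * cos (u*y))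
        \<le> indicator {0..T} u *\<^sub>R ((1 - u/T) * cos (u*0))"
      by (simp add: indicator_def)
  qed (use T in auto)
  then show ?thesis using T by (simp add: fejer_kernel_eq)
qed

lemma fejer_kernel_ge:
  assumes T: "T > 0" and y: "\<bar>y\<bar> \<le> 1/T" shows "fejer_kernel T y \<ge> T/4"
proof -
  have "T/4 = (\<integral>u. indicator {0..T} u *\<^sub>R ((1 - u/T) / 2) \<partial>lborel)"
    using fejer_kernel_eq[OF T, of 0] unfolding fejer_kernel_def by simp
  also have "\<dots> \<le> fejer_kernel T y"
    unfolding fejer_kernel_def
  proof (intro integral_mono integrable_lborel_Icc continuous_intros)
    fix u
    show "indicator {0..T} u *\<^sub>R ((1 - u/T) / 2) \<le> indicator {0..T} u *\<^sub>R ((1 - u/T) * cos (u*y))"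
    proof (cases "u \<in> {0..T}")
      case True
      have "\<bar>u*y\<bar> \<le> T * \<bar>y\<bar>"
        using True by (auto simp: abs_mult intro: mult_right_mono)
      also have "\<dots> \<le> 1" using T y by (simp add: field_simps)
      finally have "cos (u*y) \<ge> 1/2" by (rule cos_ge_half)
      moreover have "1 - u/T \<ge> 0" using True T by (auto simp: field_simps)
      ultimately have "(1 - u/T) * (1/2) \<le> (1 - u/T) * cos (u*y)" by (rule mult_left_mono)
      then show ?thesis using True by simp
    qed simp
  qed (use T in auto)
  finally show ?thesis .
qed


section \<open>Small-ball estimate from decay of the characteristic function\<close>

lemma exp_neg_sq_div_6_le: "exp (-(u\<^sup>2)/6) \<le> exp (3/2) * exp (-u :: real)"
proof -
  have "-(u\<^sup>2)/6 \<le> 3/2 + -u"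
    using sum_power2_ge_zero[of "u - 3" 0] by (simp add: power2_eq_square field_simps)
  then show ?thesis by (simp add: exp_add[symmetric])
qed

lemma integral_fejer_kernel_le:
  assumes P: "prob_space P" and Y[measurable]: "Y \<in> borel_measurable P" and T: "T > 0"
    and cos_le: "\<And>u. 0 \<le> u \<Longrightarrow> u \<le> T \<Longrightarrow> (\<integral>\<omega>. cos (u * Y \<omega>) \<partial>P) \<le> exp (-(u\<^sup>2)/6)"
  shows "(\<integral>\<omega>. fejer_kernel T (Y \<omega>) \<partial>P) \<le> exp (3/2)"
proof -
  interpret P: prob_space P by fact
  define N where "N = density lborel (\<lambda>u. indicator {0..T} u :: real)"
  have [measurable_cong]: "sets N = sets borel" by (simp add: N_def)
  interpret N: finite_measure N
  proof
    have "emeasure N (space N) = emeasure lborel {0..T}"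
      unfolding N_def by (subst emeasure_density) (auto simp: ennreal_indicator)
    then show "emeasure N (space N) \<noteq> \<infinity>" using T by simp
  qed
  have integral_N: "integral\<^sup>L N g = (\<integral>u. indicator {0..T} u *\<^sub>R g u \<partial>lborel)"
    if [measurable]: "g \<in> borel_measurable borel" for g :: "real \<Rightarrow> real"
    unfolding N_def by (subst integral_density) auto
  interpret NP: pair_sigma_finite N P ..
  interpret NP: finite_measure "N \<Otimes>\<^sub>M P"
    by (rule finite_measure_pair_measure) unfold_locales
  define f where "f u \<omega> = indicator {0..T} u * ((1 - u/T) * cos (u * Y \<omega>))" for u \<omega>
  have f_integrable: "integrable (N \<Otimes>\<^sub>M P) (case_prod f)"
  proof (rule NP.integrable_const_bound[where B=1])
    have "\<bar>f u \<omega>\<bar> \<le> 1" for u \<omega>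
    proof (cases "u \<in> {0..T}")
      case True
      then have "\<bar>1 - u/T\<bar> \<le> 1" using T by (auto simp: field_simps)
      then have "\<bar>1 - u/T\<bar> * \<bar>cos (u * Y \<omega>)\<bar> \<le> 1" by (intro mult_le_one) auto
      then show ?thesis using True by (simp add: f_def abs_mult)
    qed (simp add: f_def)
    then show "AE x in N \<Otimes>\<^sub>M P. norm (case_prod f x) \<le> 1" by auto
  qed (unfold f_def, measurable)
  have fejer_Y: "fejer_kernel T (Y \<omega>) = (\<integral>u. f u \<omega> \<partial>N)" for \<omega>
    by (subst integral_N) (auto simp: f_def fejer_kernel_def indicator_def intro!: Bochner_Integration.integral_cong)
  have "(\<integral>\<omega>. fejer_kernel T (Y \<omega>) \<partial>P) = (\<integral>u. (\<integral>\<omega>. f u \<omega> \<partial>P) \<partial>N)"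
    unfolding fejer_Y by (rule NP.Fubini_integral[OF f_integrable])
  also have "\<dots> \<le> (\<integral>u. exp (3/2) * exp (-u) \<partial>N)"
  proof (rule integral_mono)
    show "integrable N (\<lambda>u. \<integral>\<omega>. f u \<omega> \<partial>P)"
      using NP.integrable_fst[OF f_integrable] .
    show "integrable N (\<lambda>u. exp (3/2) * exp (-u))"
    proof -
      have "continuous_on {0..T} (\<lambda>u. exp (3/2) * exp (-u :: real))"
        by (intro continuous_intros)
      from integrable_lborel_Icc[OF this] show ?thesis
        unfolding N_def by (subst integrable_density) auto
    qed
    fix u
    show "(\<integral>\<omega>. f u \<omega> \<partial>P) \<le> exp (3/2) * exp (-u)"
    proof (cases "u \<in> {0..T}")
      case True
      then have u: "0 \<le> u" "u \<le> T" and w: "0 \<le> 1 - u/T" "1 - u/T \<le> 1"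
        using T by (auto simp: field_simps)
      have "(\<integral>\<omega>. f u \<omega> \<partial>P) = (1 - u/T) * (\<integral>\<omega>. cos (u * Y \<omega>) \<partial>P)"
        using True by (simp add: f_def)
      also have "\<dots> \<le> (1 - u/T) * exp (-(u\<^sup>2)/6)"
        using w cos_le[OF u] by (intro mult_left_mono)
      also have "\<dots> \<le> exp (-(u\<^sup>2)/6)"
        using w by (intro mult_left_le_one_le) auto
      also have "\<dots> \<le> exp (3/2) * exp (-u)" by (rule exp_neg_sq_div_6_le)
      finally show ?thesis .
    qed (simp add: f_def)
  qed
  also have "(\<integral>u. exp (3/2) * exp (-u) \<partial>N) = (- exp (3/2) * exp (-T)) - (- exp (3/2) * exp (-0))"
    by (subst integral_N, simp, rule integral_lborel_Icc_FTC)
       (use T in \<open>auto intro!: derivative_eq_intros continuous_intros\<close>)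
  also have "\<dots> \<le> exp (3/2)" by simp
  finally show ?thesis .
qed

lemma measure_abs_le_inverse_le:
  assumes P: "prob_space P" and Y[measurable]: "Y \<in> borel_measurable P" and T: "T > 0"
    and char_le: "\<And>u. 0 \<le> u \<Longrightarrow> u \<le> T \<Longrightarrow> cmod (\<integral>\<omega>. iexp (u * Y \<omega>) \<partial>P) \<le> exp (-(u\<^sup>2)/6)"
  shows "measure P {\<omega>\<in>space P. \<bar>Y \<omega>\<bar> \<le> 1/T} \<le> 4 * exp (3/2) / T"
proof -
  interpret P: prob_space P by fact
  let ?A = "{\<omega>\<in>space P. \<bar>Y \<omega>\<bar> \<le> 1/T}"
  have "(\<integral>\<omega>. cos (u * Y \<omega>) \<partial>P) \<le> exp (-(u\<^sup>2)/6)" if "0 \<le> u" "u \<le> T" for u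
  proof -
    have iexp_integrable: "integrable P (\<lambda>\<omega>. iexp (u * Y \<omega>))"
      by (rule P.integrable_iexp) auto
    have "(\<integral>\<omega>. cos (u * Y \<omega>) \<partial>P) = Re (\<integral>\<omega>. iexp (u * Y \<omega>) \<partial>P)"
      using integral_Re[OF iexp_integrable] by (simp add: Re_exp)
    then show ?thesis using complex_Re_le_cmod char_le[OF that] by (metis order.trans)
  qed
  then have fejer_le: "(\<integral>\<omega>. fejer_kernel T (Y \<omega>) \<partial>P) \<le> exp (3/2)"
    by (rule integral_fejer_kernel_le[OF P Y T])
  have "measure P ?A * (T/4) = (\<integral>\<omega>. indicator ?A \<omega> * (T/4) \<partial>P)"
    by simp
  also have "\<dots> \<le> (\<integral>\<omega>. fejer_kernel T (Y \<omega>) \<partial>P)"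
  proof (rule integral_mono)
    show "integrable P (\<lambda>\<omega>. indicator ?A \<omega> * (T/4))"
      by (intro integrable_mult_left integrable_real_indicator)
         (auto simp: P.emeasure_finite less_top[symmetric])
    show "integrable P (\<lambda>\<omega>. fejer_kernel T (Y \<omega>))"
      using T fejer_kernel_nonneg fejer_kernel_le
      by (intro P.integrable_const_bound[where B="T/2"]) auto
    fix \<omega> show "indicator ?A \<omega> * (T/4) \<le> fejer_kernel T (Y \<omega>)"
      using fejer_kernel_ge[OF T, of "Y \<omega>"] fejer_kernel_nonneg[OF T, of "Y \<omega>"]
      by (auto simp: indicator_def)
  qed
  finally show ?thesis using fejer_le T by (simp add: field_simps)
qed


section \<open>Standardized distributions\<close>

lemma (in real_distribution) char_weighted_sum:
  assumes J: "finite J"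
  shows "(\<integral>\<omega>. iexp (u * (\<Sum>j\<in>J. \<omega> j * x j)) \<partial>PiM J (\<lambda>_. M)) = (\<Prod>j\<in>J. char M (u * x j))"
proof -
  interpret PP: product_prob_space "\<lambda>_. M" by unfold_locales
  have "iexp (u * (\<Sum>j\<in>J. \<omega> j * x j)) = (\<Prod>j\<in>J. iexp ((u * x j) * \<omega> j))" for \<omega>
  proof -
    have "\<i> * complex_of_real (u * (\<Sum>j\<in>J. \<omega> j * x j)) = (\<Sum>j\<in>J. \<i> * complex_of_real ((u * x j) * \<omega> j))"
      by (simp add: sum_distrib_left mult_ac)
    then show ?thesis by (simp add: exp_sum J)
  qed
  then have "(\<integral>\<omega>. iexp (u * (\<Sum>j\<in>J. \<omega> j * x j)) \<partial>PiM J (\<lambda>_. M))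
      = (\<integral>\<omega>. (\<Prod>j\<in>J. iexp ((u * x j) * \<omega> j)) \<partial>PiM J (\<lambda>_. M))"
    by simp
  also have "\<dots> = (\<Prod>j\<in>J. char M (u * x j))"
    unfolding char_def by (rule PP.product_integral_prod[OF J]) (rule integrable_iexp, auto)
  finally show ?thesis .
qed

locale standardized_distribution = real_distribution \<mu> for \<mu> +
  assumes integrable_square: "integrable \<mu> (\<lambda>t. t\<^sup>2)"
    and expectation_square: "(\<integral>t. t\<^sup>2 \<partial>\<mu>) = 1"
    and expectation_id: "(\<integral>t. t \<partial>\<mu>) = 0"
    and integrable_abs_cube: "integrable \<mu> (\<lambda>t. \<bar>t\<bar> ^ 3)"
begin

abbreviation third_moment :: real where
  "third_moment \<equiv> \<integral>t. \<bar>t\<bar> ^ 3 \<partial>\<mu>"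

lemma integrable_id: "integrable \<mu> (\<lambda>t. t)"
proof (rule Bochner_Integration.integrable_bound[where f="\<lambda>t. 1 + t\<^sup>2"])
  have "\<bar>t\<bar> \<le> 1 + t\<^sup>2" for t :: real
    using sum_power2_ge_zero[of "\<bar>t\<bar> - 1" 0] by (simp add: power2_eq_square field_simps)
  then show "AE t in \<mu>. norm t \<le> norm (1 + t\<^sup>2)" by simp
qed (use integrable_square in auto)

lemma integrable_abs: "integrable \<mu> (\<lambda>t. \<bar>t\<bar>)"
  using integrable_id by simp

lemma expectation_abs_le_1: "(\<integral>t. \<bar>t\<bar> \<partial>\<mu>) \<le> 1"
proof -
  have "(\<integral>t. \<bar>t\<bar> \<partial>\<mu>) \<le> (\<integral>t. (1 + t\<^sup>2)/2 \<partial>\<mu>)"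
  proof (rule integral_mono[OF integrable_abs])
    show "integrable \<mu> (\<lambda>t. (1 + t\<^sup>2)/2)" using integrable_square by auto
    fix t :: real show "\<bar>t\<bar> \<le> (1 + t\<^sup>2)/2"
      using sum_power2_ge_zero[of "\<bar>t\<bar> - 1" 0] by (simp add: power2_eq_square field_simps)
  qed
  also have "\<dots> = 1" using integrable_square expectation_square prob_space by simp
  finally show ?thesis .
qed

lemma third_moment_ge_1: "third_moment \<ge> 1"
proof -
  have "1 = (\<integral>t. t\<^sup>2 \<partial>\<mu>)" using expectation_square by simp
  also have "\<dots> \<le> (\<integral>t. (\<bar>t\<bar> + \<bar>t\<bar>^3)/2 \<partial>\<mu>)"
  proof (rule integral_mono[OF integrable_square])
    show "integrable \<mu> (\<lambda>t. (\<bar>t\<bar> + \<bar>t\<bar>^3)/2)" using integrable_abs integrable_abs_cube by auto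
    fix t :: real
    have "0 \<le> \<bar>t\<bar> * (\<bar>t\<bar> - 1)\<^sup>2" by simp
    then show "t\<^sup>2 \<le> (\<bar>t\<bar> + \<bar>t\<bar>^3)/2"
      by (simp add: power2_eq_square power3_eq_cube algebra_simps)
  qed
  also have "\<dots> = ((\<integral>t. \<bar>t\<bar> \<partial>\<mu>) + third_moment)/2"
    using integrable_abs integrable_abs_cube by simp
  finally show ?thesis using expectation_abs_le_1 by simp
qed

lemma norm_char_le:
  assumes s: "\<bar>s\<bar> * third_moment \<le> 1"
  shows "cmod (char \<mu> s) \<le> exp (-(s\<^sup>2)/3)"
proof -
  have "variance (\<lambda>x. x) = 1" using expectation_id expectation_square by simp
  then have approx: "cmod (char \<mu> s - (1 - s^2 * 1 / 2)) \<le>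
      (s^2 / 6) * expectation (\<lambda>x. min (6 * x^2) (\<bar>s\<bar> * \<bar>x\<bar>^3))"
    by (rule char_approx3[OF integrable_id expectation_id integrable_square])
  have "expectation (\<lambda>x. min (6 * x^2) (\<bar>s\<bar> * \<bar>x\<bar>^3)) \<le> expectation (\<lambda>x. \<bar>s\<bar> * \<bar>x\<bar>^3)"
    by (rule integral_mono) (use integrable_square integrable_abs_cube in \<open>auto intro!: integrable_min\<close>)
  also have "\<dots> \<le> 1" using s by simp
  finally have "(s^2 / 6) * expectation (\<lambda>x. min (6 * x^2) (\<bar>s\<bar> * \<bar>x\<bar>^3)) \<le> s\<^sup>2/6"
    by (intro mult_left_le) auto
  moreover have "s\<^sup>2 \<le> 1"
  proof -
    have "\<bar>s\<bar> \<le> \<bar>s\<bar> * third_moment" using third_moment_ge_1 by (simp add: mult_le_cancel_left1)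
    then have "\<bar>s\<bar> \<le> 1" using s by linarith
    then show ?thesis by (metis abs_le_square_iff abs_one one_power2)
  qed
  moreover have "cmod (1 - (complex_of_real s)\<^sup>2 / 2) = 1 - s\<^sup>2/2"
  proof -
    have "1 - (complex_of_real s)\<^sup>2 / 2 = complex_of_real (1 - s\<^sup>2/2)" by simp
    then show ?thesis using \<open>s\<^sup>2 \<le> 1\<close> by (simp only: norm_of_real)
  qed
  ultimately have "cmod (char \<mu> s) \<le> s\<^sup>2/6 + (1 - s\<^sup>2/2)"
    using approx norm_triangle_ineq2[of "char \<mu> s" "1 - (complex_of_real s)\<^sup>2 / 2"] by simp
  also have "\<dots> = 1 + (-(s\<^sup>2)/3)" by simp
  also have "\<dots> \<le> exp (-(s\<^sup>2)/3)" by (rule exp_ge_add_one_self)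
  finally show ?thesis .
qed

lemma measure_abs_weighted_sum_le:
  assumes J: "finite J" and m: "m > 0" and x_le: "\<And>j. j \<in> J \<Longrightarrow> \<bar>x j\<bar> \<le> m"
    and sum_sq: "(\<Sum>j\<in>J. (x j)\<^sup>2) \<ge> 1/2" and s: "s \<ge> 0"
  shows "measure (PiM J (\<lambda>_. \<mu>)) {\<omega>\<in>space (PiM J (\<lambda>_. \<mu>)). \<bar>\<Sum>j\<in>J. \<omega> j * x j\<bar> \<le> s}
         \<le> 4 * exp (3/2) * (s + third_moment * m)"
proof -
  interpret P: prob_space "PiM J (\<lambda>_. \<mu>)" by (rule prob_space_PiM) (rule prob_space_axioms)
  \<comment> \<open>\<open>T\<close> is small enough for \<open>norm_char_le\<close> to bound every factor of the characteristic function.\<close>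
  define h where "h = max s (third_moment * m)"
  have h: "h > 0" "third_moment * m \<le> h" using third_moment_ge_1 m by (auto simp: h_def less_max_iff_disj)
  define T where "T = 1 / h"
  have T: "T > 0" using h by (simp add: T_def)
  have char_le: "cmod (\<integral>\<omega>. iexp (u * (\<Sum>j\<in>J. \<omega> j * x j)) \<partial>PiM J (\<lambda>_. \<mu>)) \<le> exp (-(u\<^sup>2)/6)"
    if u: "0 \<le> u" "u \<le> T" for u
  proof -
    have "cmod (\<integral>\<omega>. iexp (u * (\<Sum>j\<in>J. \<omega> j * x j)) \<partial>PiM J (\<lambda>_. \<mu>)) = (\<Prod>j\<in>J. cmod (char \<mu> (u * x j)))"
      unfolding char_weighted_sum[OF J] by (rule prod_norm[symmetric])
    also have "\<dots> \<le> (\<Prod>j\<in>J. exp (-((u * x j)\<^sup>2)/3))"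
    proof (rule prod_mono)
      fix j assume j: "j \<in> J"
      have "\<bar>u * x j\<bar> * third_moment \<le> T * m * third_moment"
        using u x_le[OF j] third_moment_ge_1 by (auto simp: abs_mult intro!: mult_right_mono mult_mono)
      also have "\<dots> \<le> 1"
        using h unfolding T_def by (simp add: field_simps)
      finally show "0 \<le> cmod (char \<mu> (u * x j)) \<and> cmod (char \<mu> (u * x j)) \<le> exp (-((u * x j)\<^sup>2)/3)"
        using norm_char_le by auto
    qed
    also have "\<dots> = exp (-(u\<^sup>2) * (\<Sum>j\<in>J. (x j)\<^sup>2) / 3)"
      by (simp add: exp_sum[OF J, symmetric] sum_divide_distrib sum_distrib_left power_mult_distrib)
    also have "\<dots> \<le> exp (-(u\<^sup>2)/6)"
      using mult_left_mono[OF sum_sq, of "u\<^sup>2"] by simp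
    finally show ?thesis .
  qed
  have "measure (PiM J (\<lambda>_. \<mu>)) {\<omega>\<in>space (PiM J (\<lambda>_. \<mu>)). \<bar>\<Sum>j\<in>J. \<omega> j * x j\<bar> \<le> s}
      \<le> measure (PiM J (\<lambda>_. \<mu>)) {\<omega>\<in>space (PiM J (\<lambda>_. \<mu>)). \<bar>\<Sum>j\<in>J. \<omega> j * x j\<bar> \<le> 1/T}"
    by (rule P.finite_measure_mono) (auto simp: T_def h_def)
  also have "\<dots> \<le> 4 * exp (3/2) / T"
    by (rule measure_abs_le_inverse_le[OF P.prob_space_axioms _ T char_le]) measurable
  also have "\<dots> \<le> 4 * exp (3/2) * (s + third_moment * m)"
    using s h third_moment_ge_1 m by (auto simp: T_def h_def intro!: mult_left_mono)
  finally show ?thesis .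
qed

end

section \<open>The coordinates of \<open>v_vec\<close>\<close>

lemma sgn0_measurable[measurable]: "sgn0 \<in> borel_measurable borel"
  unfolding sgn0_def[abs_def] by measurable

lemma abs_sgn0_add_diff_mult_le:
  "\<bar>(sgn0 (z + r) - sgn0 r) * y\<bar> \<le> (if \<bar>r\<bar> \<le> \<bar>z\<bar> then 2 * \<bar>y\<bar> else 0)"
  by (auto simp: sgn0_def abs_mult)

lemma sup_norm_le:
  "n > 0 \<Longrightarrow> (\<And>i. i < n \<Longrightarrow> \<bar>y i\<bar> \<le> B) \<Longrightarrow> sup_norm n y \<le> B"
  unfolding sup_norm_def by (subst Max_le_iff) auto

lemma abs_le_sup_norm: "j < n \<Longrightarrow> \<bar>y j\<bar> \<le> sup_norm n y"
  unfolding sup_norm_def by (rule Max_ge) auto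

lemma sup_norm_pos:
  assumes "(\<Sum>j<n. (y j)\<^sup>2) \<noteq> 0" shows "sup_norm n y > 0"
proof -
  obtain j where "j < n" "y j \<noteq> 0" using assms by (metis power_zero_numeral sum.neutral lessThan_iff)
  then show ?thesis using abs_le_sup_norm[of j n y] by linarith
qed

lemma symmetric_distr_integral_id:
  assumes "symmetric_distr \<mu>" "sets \<mu> = sets borel"
  shows "(\<integral>t. t \<partial>\<mu>) = 0"
proof -
  have "(\<integral>t. t \<partial>\<mu>) = (\<integral>t. t \<partial>distr \<mu> borel uminus)"
    using assms(1) unfolding symmetric_distr_def by simp
  also have "\<dots> = - (\<integral>t. t \<partial>\<mu>)"
    by (subst integral_distr) (use assms(2) in auto)
  finally show ?thesis by simp
qed

context standardized_distribution
begin

lemma v_vec_eq_iterated_integral: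
  assumes i: "i < n"
  shows "v_vec \<mu> n x i = (\<integral>z. (\<integral>y. sgn0 (y * x i + (\<Sum>j\<in>{..<n} - {i}. z j * x j)) * y \<partial>\<mu>)
                             \<partial>PiM ({..<n} - {i}) (\<lambda>_. \<mu>))"
proof -
  interpret PP: product_prob_space "\<lambda>_. \<mu>" by unfold_locales
  define J where "J = {..<n} - {i}"
  have J: "finite J" "i \<notin> J" and iJ: "insert i J = {..<n}" using i by (auto simp: J_def)
  define f where "f \<omega> = sgn0 (\<Sum>j<n. \<omega> j * x j) * \<omega> i" for \<omega> :: "nat \<Rightarrow> real"
  have f_integrable: "integrable (PiM (insert i J) (\<lambda>_. \<mu>)) f"
  proof (rule Bochner_Integration.integrable_bound[where f="\<lambda>\<omega>. \<bar>\<omega> i\<bar>"])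
    have "distr (PiM (insert i J) (\<lambda>_. \<mu>)) \<mu> (\<lambda>\<omega>. \<omega> i) = \<mu>"
      using distr_PiM_component[of "insert i J" "\<lambda>_. \<mu>" i] prob_space_axioms by simp
    then show "integrable (PiM (insert i J) (\<lambda>_. \<mu>)) (\<lambda>\<omega>. \<bar>\<omega> i\<bar>)"
      using integrable_abs integrable_distr_eq[of "\<lambda>\<omega>. \<omega> i" "PiM (insert i J) (\<lambda>_. \<mu>)" \<mu> abs]
      by simp
    show "AE \<omega> in PiM (insert i J) (\<lambda>_. \<mu>). norm (f \<omega>) \<le> norm \<bar>\<omega> i\<bar>"
      by (rule AE_I2) (auto simp: f_def sgn0_def abs_mult)
  qed (unfold f_def iJ, measurable, use i in simp)
  have "v_vec \<mu> n x i = (\<integral>\<omega>. f \<omega> \<partial>PiM (insert i J) (\<lambda>_. \<mu>))"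
    unfolding v_vec_def f_def iJ ..
  also have "\<dots> = (\<integral>z. (\<integral>y. f (z(i := y)) \<partial>\<mu>) \<partial>PiM J (\<lambda>_. \<mu>))"
    by (rule PP.product_integral_insert[OF J f_integrable])
  also have "\<dots> = (\<integral>z. (\<integral>y. sgn0 (y * x i + (\<Sum>j\<in>J. z j * x j)) * y \<partial>\<mu>) \<partial>PiM J (\<lambda>_. \<mu>))"
  proof (intro Bochner_Integration.integral_cong refl)
    fix z y
    have "(\<Sum>j<n. (z(i := y)) j * x j) = y * x i + (\<Sum>j\<in>J. z j * x j)"
      using J by (auto simp: iJ[symmetric] intro!: sum.cong)
    then show "f (z(i := y)) = sgn0 (y * x i + (\<Sum>j\<in>J. z j * x j)) * y" by (simp add: f_def)
  qed
  finally show ?thesis unfolding J_def .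
qed

lemma abs_integral_sgn0_shift_le:
  "ennreal \<bar>\<integral>y. sgn0 (y * c + r) * y \<partial>\<mu>\<bar>
     \<le> (\<integral>\<^sup>+y. ennreal (if \<bar>r\<bar> \<le> \<bar>y\<bar> * \<bar>c\<bar> then 2 * \<bar>y\<bar> else 0) \<partial>\<mu>)"
proof -
  have integrable_shift: "integrable \<mu> (\<lambda>y. sgn0 (y * c + r) * y)"
    by (rule Bochner_Integration.integrable_bound[OF integrable_abs]) (auto simp: sgn0_def abs_mult)
  \<comment> \<open>Subtracting \<open>sgn0 r * y\<close> does not change the integral since \<open>\<mu>\<close> is centred.\<close>
  have "(\<integral>y. sgn0 (y * c + r) * y \<partial>\<mu>) = (\<integral>y. (sgn0 (y * c + r) - sgn0 r) * y \<partial>\<mu>)"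
    using integrable_shift integrable_id expectation_id by (simp add: left_diff_distrib)
  then have "ennreal \<bar>\<integral>y. sgn0 (y * c + r) * y \<partial>\<mu>\<bar>
      \<le> (\<integral>\<^sup>+y. ennreal \<bar>(sgn0 (y * c + r) - sgn0 r) * y\<bar> \<partial>\<mu>)"
    by (simp only: norm_integral_le_nn_integral)
  also have "\<dots> \<le> (\<integral>\<^sup>+y. ennreal (if \<bar>r\<bar> \<le> \<bar>y\<bar> * \<bar>c\<bar> then 2 * \<bar>y\<bar> else 0) \<partial>\<mu>)"
  proof (intro nn_integral_mono ennreal_leI)
    fix y
    show "\<bar>(sgn0 (y * c + r) - sgn0 r) * y\<bar> \<le> (if \<bar>r\<bar> \<le> \<bar>y\<bar> * \<bar>c\<bar> then 2 * \<bar>y\<bar> else 0)"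
      using abs_sgn0_add_diff_mult_le[of "y * c" r y] by (simp add: abs_mult)
  qed
  finally show ?thesis .
qed

lemma nn_integral_abs_mult_affine_le:
  assumes "a \<ge> 0" "b \<ge> 0"
  shows "(\<integral>\<^sup>+y. ennreal (\<bar>y\<bar> * (a * \<bar>y\<bar> + b)) \<partial>\<mu>) \<le> ennreal (a + b)"
proof -
  have integrable: "integrable \<mu> (\<lambda>y. a * y\<^sup>2 + b * \<bar>y\<bar>)"
    using integrable_square integrable_abs by auto
  have "(\<integral>\<^sup>+y. ennreal (\<bar>y\<bar> * (a * \<bar>y\<bar> + b)) \<partial>\<mu>) = (\<integral>\<^sup>+y. ennreal (a * y\<^sup>2 + b * \<bar>y\<bar>) \<partial>\<mu>)"
    by (intro nn_integral_cong) (simp add: algebra_simps power2_eq_square abs_mult_self)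
  also have "\<dots> = ennreal (a * (\<integral>y. y\<^sup>2 \<partial>\<mu>) + b * (\<integral>y. \<bar>y\<bar> \<partial>\<mu>))"
    using integrable assms integrable_square integrable_abs
    by (subst nn_integral_eq_integral) (auto intro!: AE_I2)
  also have "\<dots> \<le> ennreal (a + b)"
    using expectation_square expectation_abs_le_1 assms by (intro ennreal_leI) (simp add: mult_left_le)
  finally show ?thesis .
qed

lemma abs_v_vec_le:
  assumes i: "i < n" and m: "m > 0" and x_le: "\<And>j. j < n \<Longrightarrow> \<bar>x j\<bar> \<le> m"
    and m_sq: "m\<^sup>2 \<le> 1/2" and sum_sq: "(\<Sum>j<n. (x j)\<^sup>2) = 1"
  shows "\<bar>v_vec \<mu> n x i\<bar> \<le> 8 * exp (3/2) * (m + third_moment * m)"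
proof -
  define K where "K = 4 * exp (3/2 :: real)"
  define J where "J = {..<n} - {i}"
  define R where "R z = (\<Sum>j\<in>J. z j * x j)" for z :: "nat \<Rightarrow> real"
  define H where "H z y = ennreal (if \<bar>R z\<bar> \<le> \<bar>y\<bar> * \<bar>x i\<bar> then 2 * \<bar>y\<bar> else 0)" for z y
  interpret PJ: prob_space "PiM J (\<lambda>_. \<mu>)" by (rule prob_space_PiM) (rule prob_space_axioms)
  interpret Q: pair_sigma_finite "PiM J (\<lambda>_. \<mu>)" \<mu> ..
  have J: "finite J" "i \<notin> J" "insert i J = {..<n}" using i by (auto simp: J_def)
  have K: "K \<ge> 0" and bounds: "third_moment * m \<ge> 0" "\<bar>x i\<bar> \<le> m"
    using third_moment_ge_1 m x_le[OF i] by (auto simp: K_def)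
  have sum_sq_J: "(\<Sum>j\<in>J. (x j)\<^sup>2) \<ge> 1/2"
  proof -
    have "1 = (x i)\<^sup>2 + (\<Sum>j\<in>J. (x j)\<^sup>2)" using sum_sq J by (metis sum.insert)
    moreover have "(x i)\<^sup>2 \<le> m\<^sup>2" using bounds by (metis abs_le_square_iff abs_of_pos m)
    ultimately show ?thesis using m_sq by simp
  qed
  have small_ball: "(\<integral>\<^sup>+z. H z y \<partial>PiM J (\<lambda>_. \<mu>))
      \<le> ennreal (2 * K) * ennreal (\<bar>y\<bar> * (\<bar>x i\<bar> * \<bar>y\<bar> + third_moment * m))" for y
  proof -
    define A where "A = {z\<in>space (PiM J (\<lambda>_. \<mu>)). \<bar>R z\<bar> \<le> \<bar>y\<bar> * \<bar>x i\<bar>}"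
    have A: "A \<in> sets (PiM J (\<lambda>_. \<mu>))" unfolding A_def R_def by measurable
    have "measure (PiM J (\<lambda>_. \<mu>)) A \<le> K * (\<bar>y\<bar> * \<bar>x i\<bar> + third_moment * m)"
      (is "_ \<le> ?bound")
      unfolding A_def R_def K_def
      by (rule measure_abs_weighted_sum_le[OF J(1) m _ sum_sq_J]) (auto simp: J_def x_le)
    have "(\<integral>\<^sup>+z. H z y \<partial>PiM J (\<lambda>_. \<mu>)) = (\<integral>\<^sup>+z. ennreal (2 * \<bar>y\<bar>) * indicator A z \<partial>PiM J (\<lambda>_. \<mu>))"
      by (intro nn_integral_cong) (auto simp: H_def A_def indicator_def)
    also have "\<dots> = ennreal (2 * \<bar>y\<bar>) * emeasure (PiM J (\<lambda>_. \<mu>)) A"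
      by (rule nn_integral_cmult_indicator[OF A])
    also have "\<dots> \<le> ennreal (2 * \<bar>y\<bar>) * ennreal ?bound"
      using \<open>measure (PiM J (\<lambda>_. \<mu>)) A \<le> ?bound\<close>
      by (intro mult_left_mono) (auto simp: PJ.emeasure_eq_measure intro!: ennreal_leI)
    also have "\<dots> = ennreal (2 * K) * ennreal (\<bar>y\<bar> * (\<bar>x i\<bar> * \<bar>y\<bar> + third_moment * m))"
      using K bounds by (simp add: ennreal_mult'[symmetric] ac_simps)
    finally show ?thesis .
  qed
  have "ennreal \<bar>v_vec \<mu> n x i\<bar>
      = ennreal \<bar>\<integral>z. (\<integral>y. sgn0 (y * x i + R z) * y \<partial>\<mu>) \<partial>PiM J (\<lambda>_. \<mu>)\<bar>"
    unfolding v_vec_eq_iterated_integral[OF i] R_def J_def ..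
  also have "\<dots> \<le> (\<integral>\<^sup>+z. ennreal \<bar>\<integral>y. sgn0 (y * x i + R z) * y \<partial>\<mu>\<bar> \<partial>PiM J (\<lambda>_. \<mu>))"
    by (rule norm_integral_le_nn_integral)
  also have "\<dots> \<le> (\<integral>\<^sup>+z. (\<integral>\<^sup>+y. H z y \<partial>\<mu>) \<partial>PiM J (\<lambda>_. \<mu>))"
    unfolding H_def by (intro nn_integral_mono abs_integral_sgn0_shift_le)
  also have "\<dots> = (\<integral>\<^sup>+y. (\<integral>\<^sup>+z. H z y \<partial>PiM J (\<lambda>_. \<mu>)) \<partial>\<mu>)"
    by (rule Q.Fubini'[symmetric]) (unfold H_def R_def, measurable)
  also have "\<dots> \<le> (\<integral>\<^sup>+y. ennreal (2 * K) * ennreal (\<bar>y\<bar> * (\<bar>x i\<bar> * \<bar>y\<bar> + third_moment * m)) \<partial>\<mu>)"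
    by (intro nn_integral_mono small_ball)
  also have "\<dots> = ennreal (2 * K) * (\<integral>\<^sup>+y. ennreal (\<bar>y\<bar> * (\<bar>x i\<bar> * \<bar>y\<bar> + third_moment * m)) \<partial>\<mu>)"
    by (rule nn_integral_cmult) measurable
  also have "\<dots> \<le> ennreal (2 * K) * ennreal (\<bar>x i\<bar> + third_moment * m)"
    using bounds by (intro mult_left_mono nn_integral_abs_mult_affine_le) auto
  also have "\<dots> = ennreal (2 * K * (\<bar>x i\<bar> + third_moment * m))"
    by (rule ennreal_mult[symmetric]) (use K bounds in auto)
  also have "\<dots> \<le> ennreal (8 * exp (3/2) * (m + third_moment * m))"
    using bounds by (intro ennreal_leI) (simp add: K_def)
  finally show ?thesis
    using bounds by (subst (asm) ennreal_le_iff) (auto intro!: mult_nonneg_nonneg)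
qed

lemma sup_norm_v_vec_le:
  assumes sum_sq: "(\<Sum>j<n. (x j)\<^sup>2) = 1" and small: "sup_norm n x \<le> (1/2) / third_moment"
  shows "sup_norm n (v_vec \<mu> n x) \<le> 16 * exp (3/2) * third_moment * sup_norm n x"
proof -
  define m where "m = sup_norm n x"
  have n: "n > 0" using sum_sq by (cases n) auto
  have m: "m > 0" using sup_norm_pos sum_sq by (simp add: m_def)
  have "(1/2) / third_moment \<le> 1/2" using third_moment_ge_1 by (simp add: field_simps)
  then have "m \<le> 1/2" using small by (simp add: m_def)
  then have "m\<^sup>2 \<le> (1/2)\<^sup>2" using m by (intro power_mono) auto
  then have "m\<^sup>2 \<le> 1/2" by (simp add: power2_eq_square)
  then have "sup_norm n (v_vec \<mu> n x) \<le> 8 * exp (3/2) * (m + third_moment * m)"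
    using abs_v_vec_le[OF _ m _ _ sum_sq] abs_le_sup_norm n by (intro sup_norm_le) (auto simp: m_def)
  also have "\<dots> \<le> 16 * exp (3/2) * third_moment * m"
    using third_moment_ge_1 m by (simp add: algebra_simps)
  finally show ?thesis unfolding m_def .
qed

end

theorem lemma4p5:
  shows "\<exists>c>0. \<exists>C>0. \<forall>(n::nat) (\<mu>::real measure) (x::nat \<Rightarrow> real).
     prob_space \<mu> \<longrightarrow> sets \<mu> = sets borel \<longrightarrow>
     symmetric_distr \<mu> \<longrightarrow> subgaussian_distr \<mu> \<longrightarrow>
     integrable \<mu> (\<lambda>t. t\<^sup>2) \<longrightarrow> (\<integral>t. t\<^sup>2 \<partial>\<mu>) = 1 \<longrightarrow>
     (\<Sum>j<n. (x j)\<^sup>2) = 1 \<longrightarrow>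
     sup_norm n x \<le> c / (\<integral>t. \<bar>t\<bar> ^ 3 \<partial>\<mu>) \<longrightarrow>
     sup_norm n (v_vec \<mu> n x) \<le> C * (\<integral>t. \<bar>t\<bar> ^ 3 \<partial>\<mu>) * sup_norm n x"
proof (rule exI[of _ "1/2"], intro conjI, simp, rule exI[of _ "16 * exp (3/2)"], intro conjI, simp,
       intro allI impI)
  fix n :: nat and \<mu> :: "real measure" and x :: "nat \<Rightarrow> real"
  assume "prob_space \<mu>" and sets: "sets \<mu> = sets borel" and "symmetric_distr \<mu>"
    and "integrable \<mu> (\<lambda>t. t\<^sup>2)" "(\<integral>t. t\<^sup>2 \<partial>\<mu>) = 1"
    and sum_sq: "(\<Sum>j<n. (x j)\<^sup>2) = 1" and small: "sup_norm n x \<le> (1/2) / (\<integral>t. \<bar>t\<bar> ^ 3 \<partial>\<mu>)"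
  moreover have "(\<integral>t. t \<partial>\<mu>) = 0"
    using \<open>symmetric_distr \<mu>\<close> sets by (rule symmetric_distr_integral_id)
  moreover have "integrable \<mu> (\<lambda>t. \<bar>t\<bar> ^ 3)"
  proof (rule ccontr)
    assume "\<not> integrable \<mu> (\<lambda>t. \<bar>t\<bar> ^ 3)"
    then have "sup_norm n x \<le> 0" using small by (simp add: not_integrable_integral_eq)
    then show False using sup_norm_pos[where n=n and y=x] sum_sq by simp
  qed
  moreover have "real_distribution \<mu>"
    using \<open>prob_space \<mu>\<close> sets by (simp add: real_distribution_def real_distribution_axioms_def)
  ultimately interpret standardized_distribution \<mu>
    by (intro standardized_distribution.intro standardized_distribution_axioms.intro)
  show "sup_norm n (v_vec \<mu> n x) \<le> 16 * exp (3/2) * third_moment * sup_norm n x"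
    using sup_norm_v_vec_le[OF sum_sq small] .
qed

end
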